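(* Let $n\ge1$, let $b_1,\dots,b_n$ be integers with $1\le b_1\le b_2\le\cdots\le b_n$, let $s=\sum_{i=1}^n b_i$, and let $f:\mathbb R^n\to\mathbb R$, $f(\bm\theta)=\prod_{i=1}^n\theta_i^{b_i}$. Let $N$ be the minimum atom count of a DC decomposition of $f$ (defined in the context). Then: (a) if $s$ is even and the atoms are of the form $(u^\top\bm\theta)^s$, then $\prod_{i=2}^n(b_i+1)\le N\le\left\lfloor\tfrac12\prod_{i=1}^n(b_i+1)\right\rfloor$; (b) if $s$ is odd and the atoms are of the form $(u^\top\bm\theta+\kappa)^{s+1}$, then $N=\prod_{i=1}^n(b_i+1)$.
   Context: A DC decomposition of $f$ with atoms is an identity, valid for all $\bm\theta\in\mathbb R^n$, $f(\bm\theta)=g(\bm\theta)-h(\bm\theta)$ with $g(\bm\theta)=\sum_{i=1}^r\alpha_i\phi_i(\bm\theta)$ and $h(\bm\theta)=\sum_{i=r+1}^{r+q}\alpha_i\phi_i(\bm\theta)$, where every $\alpha_i>0$ and each $\phi_i$ is a convex atom: $\phi_i(\bm\theta)=(u_i^\top\bm\theta)^s$ with $u_i\in\mathbb R^n$ when $s$ is even, and $\phi_i(\bm\theta)=(u_i^\top\bm\theta+\kappa_i)^{s+1}$ with $u_i\in\mathbb R^n$, $\kappa_i\in\mathbb R$ when $s$ is odd. The minimum atom count $N$ is the minimum of $r+q$ over all such decompositions. *)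

theory Defs
  imports Complex_Main
begin

text \<open>Points of R^n are represented as functions nat => real; only the
coordinates 0..n-1 matter.  lin n u theta is u^T theta.\<close>

definition lin :: "nat \<Rightarrow> (nat \<Rightarrow> real) \<Rightarrow> (nat \<Rightarrow> real) \<Rightarrow> real" where
  "lin n u \<theta> = (\<Sum>i<n. u i * \<theta> i)"

definition is_DC_even :: "nat \<Rightarrow> nat \<Rightarrow> ((nat \<Rightarrow> real) \<Rightarrow> real)
    \<Rightarrow> (real \<times> (nat \<Rightarrow> real)) list \<Rightarrow> (real \<times> (nat \<Rightarrow> real)) list \<Rightarrow> bool" where
  "is_DC_even n s f g h \<longleftrightarrow>
     (\<forall>(a, u) \<in> set (g @ h). a > 0) \<and>
     (\<forall>\<theta>. f \<theta> = (\<Sum>(a, u)\<leftarrow>g. a * lin n u \<theta> ^ s) - (\<Sum>(a, u)\<leftarrow>h. a * lin n u \<theta> ^ s))"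

definition is_DC_odd :: "nat \<Rightarrow> nat \<Rightarrow> ((nat \<Rightarrow> real) \<Rightarrow> real)
    \<Rightarrow> (real \<times> (nat \<Rightarrow> real) \<times> real) list \<Rightarrow> (real \<times> (nat \<Rightarrow> real) \<times> real) list \<Rightarrow> bool" where
  "is_DC_odd n s f g h \<longleftrightarrow>
     (\<forall>(a, u, k) \<in> set (g @ h). a > 0) \<and>
     (\<forall>\<theta>. f \<theta> = (\<Sum>(a, u, k)\<leftarrow>g. a * (lin n u \<theta> + k) ^ (s + 1))
                 - (\<Sum>(a, u, k)\<leftarrow>h. a * (lin n u \<theta> + k) ^ (s + 1)))"

definition has_DC_even :: "nat \<Rightarrow> nat \<Rightarrow> ((nat \<Rightarrow> real) \<Rightarrow> real) \<Rightarrow> bool" where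
  "has_DC_even n s f \<longleftrightarrow> (\<exists>g h. is_DC_even n s f g h)"

definition has_DC_odd :: "nat \<Rightarrow> nat \<Rightarrow> ((nat \<Rightarrow> real) \<Rightarrow> real) \<Rightarrow> bool" where
  "has_DC_odd n s f \<longleftrightarrow> (\<exists>g h. is_DC_odd n s f g h)"

definition min_atoms_even :: "nat \<Rightarrow> nat \<Rightarrow> ((nat \<Rightarrow> real) \<Rightarrow> real) \<Rightarrow> nat" where
  "min_atoms_even n s f = (LEAST k. \<exists>g h. is_DC_even n s f g h \<and> length g + length h = k)"

definition min_atoms_odd :: "nat \<Rightarrow> nat \<Rightarrow> ((nat \<Rightarrow> real) \<Rightarrow> real) \<Rightarrow> nat" where
  "min_atoms_odd n s f = (LEAST k. \<exists>g h. is_DC_odd n s f g h \<and> length g + length h = k)"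

definition monomial :: "nat \<Rightarrow> (nat \<Rightarrow> nat) \<Rightarrow> (nat \<Rightarrow> real) \<Rightarrow> real" where
  "monomial n b \<theta> = (\<Prod>i<n. \<theta> i ^ b i)"

end

theory Submission
  imports Defs "HOL-Analysis.Derivative" "HOL-Library.FuncSet"
begin

(* Upper bounds: with weights (-1)^(b+k) (b choose k) and nodes k - b/2 (k = 0..b), the b-th
   finite difference of x^j vanishes for j < b and for j = b + 1 and equals b! for j = b.
   The tensor product of these one-dimensional formulas over the n coordinates writes
   s! theta^b as a signed sum of prod_i (b_i + 1) powers (u^T theta)^s, and (s+1)! theta^b as
   one of powers (u^T theta + 1)^(s+1).  For even s, reflecting all nodes turns u into -u
   without changing (u^T theta)^s, which halves the count.

   Lower bounds: differentiating a decomposition at theta = 0 shows that its signed atoms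
   (c, z), z = u in the even and z = (kappa, u) in the odd case, have the moments
   sum c z^alpha = K [alpha = beta] for |alpha| = |beta|, where beta = b resp. (1, b), K ~= 0.
   With fewer atoms than prod_(i >= 1) (beta_i + 1), linear algebra gives a nonzero combination
   of the monomials z_1^a_1 ... z_(m-1)^a_(m-1), a_i <= beta_i, homogenised by powers of z_0,
   that vanishes at all atoms.  Multiplied by z_0^beta_0 z^(beta - a0) for a top-degree a0 of
   its support it becomes a form of degree |beta| that still vanishes at all atoms, although
   the moments pair it with the atoms to a nonzero multiple of K. *)

section \<open>Finite differences of powers\<close>

definition fd_weight :: "nat \<Rightarrow> nat \<Rightarrow> real" where
  "fd_weight b k = (-1) ^ (b + k) * real (b choose k)"

definition fdiff :: "nat \<Rightarrow> (nat \<Rightarrow> real) \<Rightarrow> real" where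
  "fdiff b \<phi> = (\<Sum>k\<le>b. fd_weight b k * \<phi> k)"

lemma fdiff_Suc: "fdiff (Suc b) \<phi> = fdiff b (\<lambda>k. \<phi> (Suc k) - \<phi> k)"
proof -
  have "fdiff (Suc b) \<phi> = (-1) ^ Suc b * \<phi> 0
      + (\<Sum>k\<le>b. (-1) ^ (b + k) * real (b choose k) * \<phi> (Suc k))
      + (\<Sum>k\<le>b. (-1) ^ (b + k) * real (b choose Suc k) * \<phi> (Suc k))"
    unfolding fdiff_def fd_weight_def by (subst sum.atMost_Suc_shift) (simp add: sum.distrib algebra_simps)
  also have "(\<Sum>k\<le>b. (-1) ^ (b + k) * real (b choose Suc k) * \<phi> (Suc k))
      = (-1) ^ b * \<phi> 0 - (\<Sum>k\<le>b. (-1) ^ (b + k) * real (b choose k) * \<phi> k)"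
  proof -
    have "(\<Sum>k\<le>b. (-1) ^ (b + k) * real (b choose k) * \<phi> k)
        = (\<Sum>k\<le>Suc b. (-1) ^ (b + k) * real (b choose k) * \<phi> k)"
      by simp
    also have "\<dots> = (-1) ^ b * \<phi> 0 - (\<Sum>k\<le>b. (-1) ^ (b + k) * real (b choose Suc k) * \<phi> (Suc k))"
      by (subst sum.atMost_Suc_shift) (simp add: sum_negf[symmetric])
    finally show ?thesis by simp
  qed
  finally show ?thesis
    unfolding fdiff_def fd_weight_def by (simp add: algebra_simps sum_subtractf)
qed

lemma fdiff_power_Suc:
  "fdiff (Suc b) (\<lambda>k. (real k + a) ^ j) = (\<Sum>i<j. real (j choose i) * fdiff b (\<lambda>k. (real k + a) ^ i))"
proof -
  have "(real (Suc k) + a) ^ j - (real k + a) ^ j = (\<Sum>i<j. real (j choose i) * (real k + a) ^ i)" for k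
  proof -
    have "(real (Suc k) + a) ^ j = ((real k + a) + 1) ^ j" by (simp add: algebra_simps)
    also have "\<dots> = (\<Sum>i\<le>j. real (j choose i) * (real k + a) ^ i)"
      by (subst binomial_ring) (simp add: mult.commute)
    finally show ?thesis by (simp add: lessThan_Suc_atMost[symmetric])
  qed
  then show ?thesis
    unfolding fdiff_Suc unfolding fdiff_def
    by (simp add: sum_distrib_left sum.swap[of _ "{..<j}"] mult_ac)
qed

lemma fdiff_power_le:
  "j \<le> b \<Longrightarrow> fdiff b (\<lambda>k. (real k + a) ^ j) = (if j = b then fact b else 0)"
proof (induction b arbitrary: j)
  case 0
  then show ?case by (simp add: fdiff_def fd_weight_def)
next
  case (Suc b)
  have "fdiff (Suc b) (\<lambda>k. (real k + a) ^ j) = (\<Sum>i<j. real (j choose i) * (if i = b then fact b else 0))"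
    using Suc by (simp add: fdiff_power_Suc)
  also have "\<dots> = (if j = Suc b then fact (Suc b) else 0)"
    using Suc.prems by (auto simp: sum.delta' lessThan_Suc)
  finally show ?case .
qed

lemma fdiff_power_Suc_self:
  "fdiff b (\<lambda>k. (real k + a) ^ Suc b) = fact (Suc b) * (a + real b / 2)"
proof (induction b arbitrary: a)
  case 0
  then show ?case by (simp add: fdiff_def fd_weight_def)
next
  case (Suc b)
  have choose: "real (Suc (Suc b) choose b) = real (Suc (Suc b)) * real (Suc b) / 2"
    by (simp add: binomial_fact field_simps)
  let ?F = "\<lambda>i. fdiff b (\<lambda>k. (real k + a) ^ i)"
  have "fdiff (Suc b) (\<lambda>k. (real k + a) ^ Suc (Suc b)) = (\<Sum>i<Suc (Suc b). real (Suc (Suc b) choose i) * ?F i)"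
    by (rule fdiff_power_Suc)
  also have "\<dots> = (\<Sum>i<b. real (Suc (Suc b) choose i) * ?F i)
      + real (Suc (Suc b) choose b) * ?F b + real (Suc (Suc b) choose Suc b) * ?F (Suc b)"
    by (simp only: sum.lessThan_Suc)
  also have "\<dots> = real (Suc (Suc b) choose b) * fact b + real (Suc (Suc b)) * (fact (Suc b) * (a + real b / 2))"
    by (simp add: fdiff_power_le Suc.IH del: power_Suc)
  finally show ?case by (simp add: choose field_simps)
qed

(* Centring the nodes at b/2 makes the (b+1)-st moment vanish as well, so that in degree
   s + 1 only the constant of an affine atom survives (ridge_sum_fd_atoms_power). *)
definition fd_node :: "nat \<Rightarrow> nat \<Rightarrow> real" where
  "fd_node b k = real k - real b / 2"

lemma fd_moment:
  assumes "j \<le> Suc b"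
  shows "(\<Sum>k\<le>b. fd_weight b k * fd_node b k ^ j) = (if j = b then fact b else 0)"
proof -
  define a where "a = - (real b / 2)"
  have "(\<Sum>k\<le>b. fd_weight b k * fd_node b k ^ j) = fdiff b (\<lambda>k. (real k + a) ^ j)"
    by (simp add: fdiff_def fd_node_def a_def)
  moreover have "a + real b / 2 = 0"
    by (simp add: a_def)
  ultimately show ?thesis
    using assms fdiff_power_le[of j b a] fdiff_power_Suc_self[of b a] by (auto simp: le_Suc_eq)
qed

section \<open>Finite-difference atoms\<close>

definition ridge_sum :: "nat \<Rightarrow> (real \<times> (nat \<Rightarrow> real)) list \<Rightarrow> (real \<Rightarrow> real) \<Rightarrow> (nat \<Rightarrow> real) \<Rightarrow> real" where
  "ridge_sum n L \<phi> \<theta> = (\<Sum>(w, u)\<leftarrow>L. w * \<phi> (lin n u \<theta>))"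

lemma ridge_sum_Nil [simp]: "ridge_sum n [] \<phi> \<theta> = 0"
  by (simp add: ridge_sum_def)

lemma ridge_sum_append [simp]: "ridge_sum n (L @ M) \<phi> \<theta> = ridge_sum n L \<phi> \<theta> + ridge_sum n M \<phi> \<theta>"
  by (simp add: ridge_sum_def)

lemma ridge_sum_concat:
  "ridge_sum n (concat (map F xs)) \<phi> \<theta> = (\<Sum>x\<leftarrow>xs. ridge_sum n (F x) \<phi> \<theta>)"
  by (induction xs) simp_all

lemma ridge_sum_cmult: "ridge_sum n L (\<lambda>x. c * \<phi> x) \<theta> = c * ridge_sum n L \<phi> \<theta>"
  unfolding ridge_sum_def by (induction L) (auto simp: algebra_simps)

lemma ridge_sum_sum:
  "ridge_sum n L (\<lambda>x. \<Sum>j\<in>J. f j x) \<theta> = (\<Sum>j\<in>J. ridge_sum n L (f j) \<theta>)"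
  unfolding ridge_sum_def by (induction L) (auto simp: sum.distrib sum_distrib_left)

lemma ridge_sum_scale:
  "ridge_sum n (map (\<lambda>(w, u). (c * w, u)) L) \<phi> \<theta> = c * ridge_sum n L \<phi> \<theta>"
  unfolding ridge_sum_def by (induction L) (auto simp: algebra_simps)

lemma ridge_sum_sign_split:
  "ridge_sum n L \<phi> \<theta> = ridge_sum n (filter (\<lambda>(w, u). 0 < w) L) \<phi> \<theta>
     - ridge_sum n (map (\<lambda>(w, u). (- w, u)) (filter (\<lambda>(w, u). w < 0) L)) \<phi> \<theta>"
  unfolding ridge_sum_def by (induction L) auto

lemma length_sign_split:
  "length (filter (\<lambda>(w, u). 0 < w) L) + length (filter (\<lambda>(w, u). w < (0::real)) L) \<le> length L"
  by (induction L) auto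

lemma is_DC_even_of_ridge_sum:
  assumes "\<And>\<theta>. f \<theta> = ridge_sum n L (\<lambda>x. x ^ s) \<theta>"
  shows "\<exists>g h. is_DC_even n s f g h \<and> length g + length h \<le> length L"
proof (intro exI conjI)
  let ?g = "filter (\<lambda>(w, u). 0 < w) L"
  let ?h = "map (\<lambda>(w, u). (- w, u)) (filter (\<lambda>(w, u). w < 0) L)"
  show "is_DC_even n s f ?g ?h"
    unfolding is_DC_even_def
    using assms ridge_sum_sign_split[of n L] by (auto simp: ridge_sum_def)
  show "length ?g + length ?h \<le> length L"
    using length_sign_split[of L] by simp
qed

lemma is_DC_odd_of_ridge_sum:
  assumes "\<And>\<theta>. f \<theta> = ridge_sum n L (\<lambda>x. (x + \<kappa>) ^ Suc s) \<theta>"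
  shows "\<exists>g h. is_DC_odd n s f g h \<and> length g + length h \<le> length L"
proof (intro exI conjI)
  let ?g = "map (\<lambda>(w, u). (w, u, \<kappa>)) (filter (\<lambda>(w, u). 0 < w) L)"
  let ?h = "map (\<lambda>(w, u). (- w, u, \<kappa>)) (filter (\<lambda>(w, u). w < 0) L)"
  show "is_DC_odd n s f ?g ?h"
    unfolding is_DC_odd_def
    using assms ridge_sum_sign_split[of n L] by (auto simp: ridge_sum_def o_def case_prod_unfold)
  show "length ?g + length ?h \<le> length L"
    using length_sign_split[of L] by simp
qed

definition extend_atom :: "nat \<Rightarrow> nat \<Rightarrow> nat \<Rightarrow> real \<times> (nat \<Rightarrow> real) \<Rightarrow> real \<times> (nat \<Rightarrow> real)" where
  "extend_atom i b k = (\<lambda>(w, u). (w * fd_weight b k, u(i := fd_node b k)))"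

(* One atom for every k with k i \<le> b i (i < n), of weight \<Prod>i. fd_weight (b i) (k i) and
   direction (\<lambda>i. fd_node (b i) (k i)). *)
fun fd_atoms :: "(nat \<Rightarrow> nat) \<Rightarrow> nat \<Rightarrow> (real \<times> (nat \<Rightarrow> real)) list" where
  "fd_atoms b 0 = [(1, \<lambda>_. 0)]"
| "fd_atoms b (Suc n) = concat (map (\<lambda>k. map (extend_atom n (b n) k) (fd_atoms b n)) [0..<Suc (b n)])"

lemma length_fd_atoms: "length (fd_atoms b n) = (\<Prod>i<n. b i + 1)"
  by (induction n) (simp_all add: length_concat o_def map_replicate_const sum_list_replicate)

lemma lin_Suc_upd: "lin (Suc n) (u(n := p)) \<theta> = lin n u \<theta> + p * \<theta> n"
  unfolding lin_def by (simp add: sum.lessThan_Suc)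

lemma ridge_sum_extend_atom:
  "ridge_sum (Suc n) (map (extend_atom n b k) L) \<phi> \<theta>
     = fd_weight b k * ridge_sum n L (\<lambda>x. \<phi> (x + fd_node b k * \<theta> n)) \<theta>"
proof (induction L)
  case (Cons a L)
  then show ?case
    by (cases a) (simp add: ridge_sum_def extend_atom_def lin_Suc_upd algebra_simps)
qed simp

lemma ridge_sum_fd_atoms_Suc:
  "ridge_sum (Suc n) (fd_atoms b (Suc n)) \<phi> \<theta>
     = (\<Sum>k\<le>b n. fd_weight (b n) k * ridge_sum n (fd_atoms b n) (\<lambda>x. \<phi> (x + fd_node (b n) k * \<theta> n)) \<theta>)"
  by (simp add: ridge_sum_concat ridge_sum_extend_atom interv_sum_list_conv_sum_set_nat
      atLeast0LessThan lessThan_Suc_atMost del: upt_Suc)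

lemma ridge_sum_fd_atoms_Suc_power:
  "ridge_sum (Suc n) (fd_atoms b (Suc n)) (\<lambda>x. (x + c) ^ e) \<theta>
     = (\<Sum>j\<le>e. real (e choose j) * \<theta> n ^ j * (\<Sum>k\<le>b n. fd_weight (b n) k * fd_node (b n) k ^ j)
          * ridge_sum n (fd_atoms b n) (\<lambda>x. (x + c) ^ (e - j)) \<theta>)"
proof -
  have binomial: "(x + p * \<theta> n + c) ^ e = (\<Sum>j\<le>e. (real (e choose j) * (p ^ j * \<theta> n ^ j)) * (x + c) ^ (e - j))"
    for x p :: real
    using binomial_ring[of "p * \<theta> n" "x + c" e] by (simp add: algebra_simps power_mult_distrib)
  have "ridge_sum (Suc n) (fd_atoms b (Suc n)) (\<lambda>x. (x + c) ^ e) \<theta>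
      = (\<Sum>k\<le>b n. fd_weight (b n) k * ridge_sum n (fd_atoms b n)
          (\<lambda>x. \<Sum>j\<le>e. (real (e choose j) * (fd_node (b n) k ^ j * \<theta> n ^ j)) * (x + c) ^ (e - j)) \<theta>)"
    by (simp only: ridge_sum_fd_atoms_Suc binomial)
  then show ?thesis
    by (simp add: ridge_sum_sum ridge_sum_cmult sum_distrib_left sum_distrib_right sum.swap[of _ "{..e}"] mult_ac)
qed

lemma monomial_Suc: "monomial (Suc n) b \<theta> = monomial n b \<theta> * \<theta> n ^ b n"
  by (simp add: monomial_def)

lemma ridge_sum_fd_atoms_power:
  assumes "e \<le> Suc (\<Sum>i<n. b i)"
  shows "ridge_sum n (fd_atoms b n) (\<lambda>x. (x + c) ^ e) \<theta>
           = (if e < (\<Sum>i<n. b i) then 0 else fact e * c ^ (e - (\<Sum>i<n. b i)) * monomial n b \<theta>)"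
  using assms
proof (induction n arbitrary: e)
  case 0
  then show ?case
    by (auto simp: ridge_sum_def lin_def monomial_def le_Suc_eq)
next
  case (Suc n)
  define B where "B = (\<Sum>i<n. b i)"
  define m where "m = b n"
  let ?G = "\<lambda>j. ridge_sum n (fd_atoms b n) (\<lambda>x. (x + c) ^ j) \<theta>"
  have IH: "?G j = (if j < B then 0 else fact j * c ^ (j - B) * monomial n b \<theta>)" if "j \<le> Suc B" for j
    using Suc.IH that unfolding B_def by blast
  have summand: "real (e choose j) * \<theta> n ^ j * (\<Sum>k\<le>m. fd_weight m k * fd_node m k ^ j) * ?G (e - j)
      = (if j = m then real (e choose m) * \<theta> n ^ m * fact m * ?G (e - m) else 0)" if "j \<le> e" for j
  proof (cases "j \<le> Suc m")
    case True
    then show ?thesis by (simp add: fd_moment)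
  next
    case False
    then have "e - j < B" "e - j \<le> Suc B"
      using Suc.prems that by (simp_all add: B_def m_def)
    then show ?thesis using False IH by auto
  qed
  have "ridge_sum (Suc n) (fd_atoms b (Suc n)) (\<lambda>x. (x + c) ^ e) \<theta>
      = (\<Sum>j\<le>e. if j = m then real (e choose m) * \<theta> n ^ m * fact m * ?G (e - m) else 0)"
    unfolding ridge_sum_fd_atoms_Suc_power m_def[symmetric] by (rule sum.cong) (simp_all add: summand)
  also have "\<dots> = (if m \<le> e then real (e choose m) * \<theta> n ^ m * fact m * ?G (e - m) else 0)"
    by (simp add: sum.delta')
  also have "\<dots> = (if e < B + m then 0 else fact e * c ^ (e - (B + m)) * (monomial n b \<theta> * \<theta> n ^ m))"
  proof (cases "e < B + m")
    case False
    then have "m \<le> e" "e - m \<le> Suc B" "\<not> e - m < B"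
      using Suc.prems by (simp_all add: B_def m_def)
    moreover have "real (e choose m) * fact m * fact (e - m) = fact e"
      using \<open>m \<le> e\<close> by (simp add: binomial_fact)
    ultimately show ?thesis
      using IH[of "e - m"] False by (simp add: algebra_simps)
  qed (use IH in auto)
  finally show ?case
    by (simp add: B_def m_def monomial_Suc)
qed

lemma fd_weight_reflect: "k \<le> b \<Longrightarrow> fd_weight b (b - k) = (-1) ^ b * fd_weight b k"
proof -
  assume "k \<le> b"
  then have "b + (b - k) + 2 * k = b + (b + k)"
    by simp
  then have "(-1 :: real) ^ (b + (b - k)) * (-1) ^ (2 * k) = (-1) ^ b * (-1) ^ (b + k)"
    by (simp only: power_add[symmetric])
  then have "(-1 :: real) ^ (b + (b - k)) = (-1) ^ b * (-1) ^ (b + k)"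
    by (simp add: power_mult)
  then show ?thesis
    using \<open>k \<le> b\<close> by (simp add: fd_weight_def binomial_symmetric[symmetric])
qed

lemma fd_node_reflect: "k \<le> b \<Longrightarrow> fd_node b (b - k) = - fd_node b k"
  by (simp add: fd_node_def of_nat_diff)

lemma ridge_sum_fd_atoms_reflect:
  "ridge_sum n (fd_atoms b n) \<phi> \<theta> = (-1) ^ (\<Sum>i<n. b i) * ridge_sum n (fd_atoms b n) (\<lambda>x. \<phi> (- x)) \<theta>"
proof (induction n arbitrary: \<phi>)
  case 0
  then show ?case by (simp add: ridge_sum_def lin_def)
next
  case (Suc n)
  define m where "m = b n"
  let ?R = "\<lambda>\<psi>. ridge_sum n (fd_atoms b n) \<psi> \<theta>"
  let ?S = "\<Sum>k\<le>m. fd_weight m k * ?R (\<lambda>x. \<phi> (- x + fd_node m k * \<theta> n))"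
  have "ridge_sum (Suc n) (fd_atoms b (Suc n)) \<phi> \<theta> = (-1) ^ (\<Sum>i<n. b i) * ?S"
    unfolding ridge_sum_fd_atoms_Suc m_def[symmetric]
    by (subst Suc.IH) (simp add: sum_distrib_left mult_ac)
  moreover have "ridge_sum (Suc n) (fd_atoms b (Suc n)) (\<lambda>x. \<phi> (- x)) \<theta> = (-1) ^ m * ?S"
  proof -
    have "ridge_sum (Suc n) (fd_atoms b (Suc n)) (\<lambda>x. \<phi> (- x)) \<theta>
        = (\<Sum>k\<le>m. fd_weight m (m - k) * ?R (\<lambda>x. \<phi> (- x - fd_node m (m - k) * \<theta> n)))"
      unfolding ridge_sum_fd_atoms_Suc m_def[symmetric]
      using sum.atLeastAtMost_rev[of _ 0 m] by (simp add: atLeast0AtMost)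
    also have "\<dots> = (-1) ^ m * ?S"
      unfolding sum_distrib_left by (rule sum.cong) (simp_all add: fd_weight_reflect fd_node_reflect)
    finally show ?thesis .
  qed
  ultimately show ?case
    by (simp add: m_def power_add mult_ac)
qed

lemma ridge_sum_fd_atoms_power_reflect:
  "ridge_sum n (fd_atoms b n) (\<lambda>x. (x - c) ^ e) \<theta>
     = (-1) ^ ((\<Sum>i<n. b i) + e) * ridge_sum n (fd_atoms b n) (\<lambda>x. (x + c) ^ e) \<theta>"
proof -
  have "(- x - c) ^ e = (-1) ^ e * (x + c) ^ e" for x :: real
    using power_mult_distrib[of "-1" "x + c" e] by simp
  then show ?thesis
    by (subst ridge_sum_fd_atoms_reflect) (simp add: ridge_sum_cmult power_add)
qed

lemma sum_atMost_symmetric: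
  fixes T :: "nat \<Rightarrow> real"
  assumes "\<And>k. k \<le> m \<Longrightarrow> T (m - k) = T k"
  shows "(\<Sum>k\<le>m. T k) = 2 * (\<Sum>k<Suc m div 2. T k) + (if even m then T (m div 2) else 0)"
proof -
  define h where "h = Suc m div 2"
  have "{..m} = {..<h} \<union> {h..m}"
    by (auto simp: h_def)
  then have "(\<Sum>k\<le>m. T k) = (\<Sum>k<h. T k) + (\<Sum>k\<in>{h..m}. T k)"
    by (simp add: sum.union_disjoint ivl_disj_int)
  moreover have "(\<Sum>k\<in>{h..m}. T k) = (if even m then T (m div 2) else 0) + (\<Sum>k\<in>{Suc m - h..m}. T k)"
  proof (cases "even m")
    case True
    then have "{h..m} = insert h {Suc h..m}" "Suc m - h = Suc h" "h = m div 2"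
      by (auto simp: h_def)
    then show ?thesis using True by simp
  next
    case False
    then have "Suc m - h = h"
      by (simp add: h_def) presburger
    then show ?thesis using False by simp
  qed
  moreover have "(\<Sum>k\<in>{Suc m - h..m}. T k) = (\<Sum>k<h. T (m - k))"
    by (rule sum.reindex_bij_witness[where i = "\<lambda>k. m - k" and j = "\<lambda>k. m - k"]) (auto simp: h_def)
  moreover have "(\<Sum>k<h. T (m - k)) = (\<Sum>k<h. T k)"
    using assms by (intro sum.cong) (auto simp: h_def)
  ultimately show ?thesis
    unfolding h_def by simp
qed

(* The atoms of the multi-indices k and b - k have opposite directions.  Keep the atoms whose
   last index lies below the middle and recurse on the middle slice; this drops the centre atom,
   whose direction is 0. *)
fun fd_half_atoms :: "(nat \<Rightarrow> nat) \<Rightarrow> nat \<Rightarrow> (real \<times> (nat \<Rightarrow> real)) list" where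
  "fd_half_atoms b 0 = []"
| "fd_half_atoms b (Suc n) = concat (map (\<lambda>k. map (extend_atom n (b n) k) (fd_atoms b n)) [0..<Suc (b n) div 2])
      @ (if even (b n) then map (extend_atom n (b n) (b n div 2)) (fd_half_atoms b n) else [])"

lemma length_fd_half_atoms: "length (fd_half_atoms b n) = (\<Prod>i<n. b i + 1) div 2"
proof (induction n)
  case (Suc n)
  let ?P = "\<Prod>i<n. b i + 1"
  have "length (fd_half_atoms b (Suc n)) = Suc (b n) div 2 * ?P + (if even (b n) then ?P div 2 else 0)"
    using Suc by (simp add: length_concat o_def map_replicate_const sum_list_replicate length_fd_atoms)
  also have "\<dots> = (\<Prod>i<Suc n. b i + 1) div 2"
    by (cases "even (b n)") (auto elim!: evenE oddE simp: algebra_simps)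
  finally show ?case .
qed simp

lemma ridge_sum_fd_half_atoms:
  assumes "0 < e" and "even ((\<Sum>i<n. b i) + e)"
  shows "2 * ridge_sum n (fd_half_atoms b n) (\<lambda>x. x ^ e) \<theta> = ridge_sum n (fd_atoms b n) (\<lambda>x. x ^ e) \<theta>"
  using assms(2)
proof (induction n)
  case 0
  then show ?case using assms(1) by (simp add: ridge_sum_def lin_def)
next
  case (Suc n)
  define m where "m = b n"
  let ?R = "\<lambda>L \<psi>. ridge_sum n L \<psi> \<theta>"
  define T where "T k = fd_weight m k * ?R (fd_atoms b n) (\<lambda>x. (x + fd_node m k * \<theta> n) ^ e)" for k
  have full: "ridge_sum (Suc n) (fd_atoms b (Suc n)) (\<lambda>x. x ^ e) \<theta> = (\<Sum>k\<le>m. T k)"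
    unfolding ridge_sum_fd_atoms_Suc T_def m_def ..
  have half: "ridge_sum (Suc n) (fd_half_atoms b (Suc n)) (\<lambda>x. x ^ e) \<theta>
      = (\<Sum>k<Suc m div 2. T k) + (if even m then fd_weight m (m div 2) * ?R (fd_half_atoms b n) (\<lambda>x. x ^ e) else 0)"
    by (simp add: ridge_sum_concat ridge_sum_extend_atom interv_sum_list_conv_sum_set_nat atLeast0LessThan
        T_def m_def fd_node_def real_of_nat_div del: upt_Suc)
  have "T (m - k) = T k" if "k \<le> m" for k
  proof -
    have "even (m + ((\<Sum>i<n. b i) + e))"
      using Suc.prems by (auto simp: m_def)
    then have "(-1 :: real) ^ (m + ((\<Sum>i<n. b i) + e)) = 1"
      by simp
    then show ?thesis
      using that by (simp add: T_def fd_weight_reflect fd_node_reflect ridge_sum_fd_atoms_power_reflect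
          power_add[symmetric] flip: diff_conv_add_uminus)
  qed
  then have "(\<Sum>k\<le>m. T k) = 2 * (\<Sum>k<Suc m div 2. T k) + (if even m then T (m div 2) else 0)"
    by (rule sum_atMost_symmetric)
  moreover have "T (m div 2) = fd_weight m (m div 2) * 2 * ?R (fd_half_atoms b n) (\<lambda>x. x ^ e)" if "even m"
    using that Suc.IH Suc.prems by (simp add: T_def fd_node_def real_of_nat_div m_def)
  ultimately show ?case
    using full half by (simp add: algebra_simps)
qed

section \<open>Moments force many atoms\<close>

lemma homogeneous_system_nontrivial_solution:
  fixes E :: "('a \<Rightarrow> 'b :: field) list"
  assumes "finite A" and "length E < card A"
  shows "\<exists>x. (\<exists>a\<in>A. x a \<noteq> 0) \<and> (\<forall>e\<in>set E. (\<Sum>a\<in>A. e a * x a) = 0)"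
  using assms
proof (induction "length E" arbitrary: E A)
  case 0
  then have "A \<noteq> {}"
    by auto
  then obtain a0 where "a0 \<in> A"
    by blast
  then show ?case
    using 0 by (intro exI[of _ "\<lambda>a. if a = a0 then 1 else 0"]) auto
next
  case (Suc k)
  then obtain e E' where E: "E = e # E'" "length E' = k"
    by (cases E) auto
  show ?case
  proof (cases "\<forall>a\<in>A. e a = 0")
    case True
    obtain x where "\<exists>a\<in>A. x a \<noteq> 0" "\<forall>f\<in>set E'. (\<Sum>a\<in>A. f a * x a) = 0"
      using Suc.hyps(1)[of E' A] Suc.prems E by auto
    with True show ?thesis
      unfolding E by auto
  next
    case False
    then obtain a0 where a0: "a0 \<in> A" "e a0 \<noteq> 0" by blast
    define A' where "A' = A - {a0}"
    have A: "A = insert a0 A'" "a0 \<notin> A'" "finite A'"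
      using a0 Suc.prems by (auto simp: A'_def)
    let ?eliminate = "\<lambda>f a. f a - f a0 / e a0 * e a"
    have "length (map ?eliminate E') < card A'"
      using Suc.prems A E by simp
    then obtain x' where x'_nonzero: "\<exists>a\<in>A'. x' a \<noteq> 0"
      and x'_solves: "\<forall>f\<in>set E'. (\<Sum>a\<in>A'. ?eliminate f a * x' a) = 0"
      using Suc.hyps(1)[of "map ?eliminate E'" A'] A(3) E(2) by auto
    define x where "x = x'(a0 := - (\<Sum>a\<in>A'. e a * x' a) / e a0)"
    have sum_x: "(\<Sum>a\<in>A. f a * x a) = f a0 * x a0 + (\<Sum>a\<in>A'. f a * x' a)" for f
    proof -
      have "(\<Sum>a\<in>A'. f a * x a) = (\<Sum>a\<in>A'. f a * x' a)"
        using A(2) by (intro sum.cong) (auto simp: x_def)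
      then show ?thesis
        using A by simp
    qed
    have "(\<Sum>a\<in>A. f a * x a) = 0" if "f \<in> set E" for f
    proof (cases "f = e")
      case False
      with that E have "(\<Sum>a\<in>A'. f a * x' a) - f a0 / e a0 * (\<Sum>a\<in>A'. e a * x' a) = 0"
        using x'_solves by (simp add: algebra_simps sum_subtractf sum_distrib_left)
      then show ?thesis
        unfolding sum_x by (simp add: x_def)
    qed (unfold sum_x, simp add: x_def a0)
    moreover have "\<exists>a\<in>A. x a \<noteq> 0"
      using x'_nonzero A by (auto simp: x_def)
    ultimately show ?thesis by blast
  qed
qed

lemma rehomogenised_form_vanishes:
  fixes z :: "nat \<Rightarrow> real" and S :: "(nat \<Rightarrow> nat) set"
  assumes "finite S" and "\<And>a. a \<in> S \<Longrightarrow> sum a I \<le> D" and "D \<le> B" and "0 < p"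
    and "(\<Sum>a\<in>S. x a * (z 0 ^ (B - sum a I) * (\<Prod>i\<in>I. z i ^ a i))) = 0"
  shows "(\<Sum>a\<in>S. x a * (z 0 ^ (p + D - sum a I) * (\<Prod>i\<in>I. z i ^ (a i + r i)))) = 0"
proof -
  let ?Q = "\<Sum>a\<in>S. x a * (z 0 ^ (D - sum a I) * (\<Prod>i\<in>I. z i ^ a i))"
  have "(\<Sum>a\<in>S. x a * (z 0 ^ (p + D - sum a I) * (\<Prod>i\<in>I. z i ^ (a i + r i))))
      = z 0 ^ p * (\<Prod>i\<in>I. z i ^ r i) * ?Q"
  proof (unfold sum_distrib_left, intro sum.cong refl)
    fix a assume "a \<in> S"
    then have "p + D - sum a I = p + (D - sum a I)"
      using assms(2) by simp
    then show "x a * (z 0 ^ (p + D - sum a I) * (\<Prod>i\<in>I. z i ^ (a i + r i)))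
        = z 0 ^ p * (\<Prod>i\<in>I. z i ^ r i) * (x a * (z 0 ^ (D - sum a I) * (\<Prod>i\<in>I. z i ^ a i)))"
      by (simp add: power_add prod.distrib)
  qed
  moreover have "?Q = 0" if "z 0 \<noteq> 0"
  proof -
    have "z 0 ^ (B - D) * ?Q = (\<Sum>a\<in>S. x a * (z 0 ^ (B - sum a I) * (\<Prod>i\<in>I. z i ^ a i)))"
      unfolding sum_distrib_left
      by (intro sum.cong) (simp_all add: assms(2,3) power_add[symmetric])
    then show ?thesis
      using that assms(5) by simp
  qed
  ultimately show ?thesis
    using assms(4) by (cases "z 0 = 0") simp_all
qed

lemma sum_list_sum_swap:
  "(\<Sum>y\<leftarrow>ys. \<Sum>a\<in>S. f a y) = (\<Sum>a\<in>S. \<Sum>y\<leftarrow>ys. (f a y :: 'b :: comm_monoid_add))"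
  by (induction ys) (simp_all add: sum.distrib)

(* z^(shift_exponent m beta a0 a) is z_0^beta_0 z^(beta - a0) times z^a homogenised by z_0 to
   the degree |a0|: a form of degree |beta| that equals z^beta exactly when a = a0. *)
definition shift_exponent :: "nat \<Rightarrow> (nat \<Rightarrow> nat) \<Rightarrow> (nat \<Rightarrow> nat) \<Rightarrow> (nat \<Rightarrow> nat) \<Rightarrow> nat \<Rightarrow> nat" where
  "shift_exponent m \<beta> a\<^sub>0 a i =
     (if i = 0 then \<beta> 0 + sum a\<^sub>0 {1..<m} - sum a {1..<m} else a i + (\<beta> i - a\<^sub>0 i))"

lemma lessThan_eq_insert_0: "0 < (m :: nat) \<Longrightarrow> {..<m} = insert 0 {1..<m}"
  by auto

lemma prod_shift_exponent:
  assumes "0 < m"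
  shows "(\<Prod>i<m. z i ^ shift_exponent m \<beta> a\<^sub>0 a i)
           = z 0 ^ (\<beta> 0 + sum a\<^sub>0 {1..<m} - sum a {1..<m}) * (\<Prod>i\<in>{1..<m}. z i ^ (a i + (\<beta> i - a\<^sub>0 i)))"
proof -
  have "(\<Prod>i\<in>{1..<m}. z i ^ shift_exponent m \<beta> a\<^sub>0 a i) = (\<Prod>i\<in>{1..<m}. z i ^ (a i + (\<beta> i - a\<^sub>0 i)))"
    by (intro prod.cong) (auto simp: shift_exponent_def)
  then show ?thesis
    using assms by (simp add: lessThan_eq_insert_0 shift_exponent_def[of m \<beta> a\<^sub>0 a 0])
qed

lemma sum_shift_exponent:
  assumes "0 < m" and "\<And>i. i \<in> {1..<m} \<Longrightarrow> a\<^sub>0 i \<le> \<beta> i" and "sum a {1..<m} \<le> sum a\<^sub>0 {1..<m}"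
  shows "(\<Sum>i<m. shift_exponent m \<beta> a\<^sub>0 a i) = (\<Sum>i<m. \<beta> i)"
proof -
  have "(\<Sum>i\<in>{1..<m}. shift_exponent m \<beta> a\<^sub>0 a i) = sum a {1..<m} + (\<Sum>i\<in>{1..<m}. \<beta> i - a\<^sub>0 i)"
    by (auto simp: shift_exponent_def sum.distrib intro: sum.cong)
  also have "(\<Sum>i\<in>{1..<m}. \<beta> i - a\<^sub>0 i) = sum \<beta> {1..<m} - sum a\<^sub>0 {1..<m}"
    using assms(2) by (rule sum_subtractf_nat)
  moreover have "sum a\<^sub>0 {1..<m} \<le> sum \<beta> {1..<m}"
    using assms(2) by (rule sum_mono)
  ultimately show ?thesis
    using assms by (simp add: lessThan_eq_insert_0 shift_exponent_def[of m \<beta> a\<^sub>0 a 0])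
qed

lemma shift_exponent_eq_iff:
  assumes "a \<in> PiE {1..<m} (\<lambda>i. {..\<beta> i})" and "a\<^sub>0 \<in> PiE {1..<m} (\<lambda>i. {..\<beta> i})"
  shows "(\<forall>i<m. shift_exponent m \<beta> a\<^sub>0 a i = \<beta> i) \<longleftrightarrow> a = a\<^sub>0"
proof
  assume shift: "\<forall>i<m. shift_exponent m \<beta> a\<^sub>0 a i = \<beta> i"
  have "a i = a\<^sub>0 i" if "i \<in> {1..<m}" for i
  proof -
    have "a i + (\<beta> i - a\<^sub>0 i) = \<beta> i"
      using that shift[rule_format, of i] by (simp add: shift_exponent_def)
    moreover have "a\<^sub>0 i \<le> \<beta> i"
      using that assms(2) by (auto simp: PiE_iff)
    ultimately show ?thesis
      by linarith
  qed
  with assms show "a = a\<^sub>0"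
    by (rule PiE_ext)
next
  assume "a = a\<^sub>0"
  moreover have "a\<^sub>0 i \<le> \<beta> i" if "0 < i" "i < m" for i
    using that assms(2) by (auto simp: PiE_iff)
  ultimately show "\<forall>i<m. shift_exponent m \<beta> a\<^sub>0 a i = \<beta> i"
    by (auto simp: shift_exponent_def)
qed

lemma vanishing_form_of_moments_eq_0:
  fixes m :: nat and Z :: "(real \<times> (nat \<Rightarrow> real)) list" and \<beta> :: "nat \<Rightarrow> nat" and K :: real
  defines "A \<equiv> PiE {1..<m} (\<lambda>i. {..\<beta> i})"
  assumes "0 < m" and "0 < \<beta> 0" and "K \<noteq> 0"
    and moments: "\<And>\<alpha>. (\<Sum>i<m. \<alpha> i) = (\<Sum>i<m. \<beta> i) \<Longrightarrow>
      (\<Sum>(c, z)\<leftarrow>Z. c * (\<Prod>i<m. z i ^ \<alpha> i)) = (if \<forall>i<m. \<alpha> i = \<beta> i then K else 0)"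
    and vanishing: "\<And>c z. (c, z) \<in> set Z \<Longrightarrow>
      (\<Sum>a\<in>A. x a * (z 0 ^ (sum \<beta> {1..<m} - sum a {1..<m}) * (\<Prod>i\<in>{1..<m}. z i ^ a i))) = 0"
  shows "\<forall>a\<in>A. x a = 0"
proof (rule ccontr)
  define S where "S = {a \<in> A. x a \<noteq> 0}"
  assume "\<not> ?thesis"
  then have S: "finite S" "S \<noteq> {}" "S \<subseteq> A"
    by (auto simp: S_def A_def finite_PiE)
  define D where "D = Max ((\<lambda>a. sum a {1..<m}) ` S)"
  have "D \<in> (\<lambda>a. sum a {1..<m}) ` S"
    unfolding D_def using S by (intro Max_in) auto
  then obtain a\<^sub>0 where a\<^sub>0: "a\<^sub>0 \<in> S" "sum a\<^sub>0 {1..<m} = D"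
    by blast
  have max: "sum a {1..<m} \<le> sum a\<^sub>0 {1..<m}" if "a \<in> S" for a
    unfolding a\<^sub>0(2) D_def using S(1) that by (intro Max_ge) auto
  let ?\<alpha> = "shift_exponent m \<beta> a\<^sub>0"
  have a\<^sub>0_le: "a\<^sub>0 i \<le> \<beta> i" if "i \<in> {1..<m}" for i
    using a\<^sub>0(1) S(3) that by (auto simp: A_def PiE_iff)
  have "(\<Sum>a\<in>S. x a * (\<Prod>i<m. z i ^ ?\<alpha> a i)) = 0" if "(c, z) \<in> set Z" for c z
  proof -
    have "(\<Sum>a\<in>A. x a * (z 0 ^ (sum \<beta> {1..<m} - sum a {1..<m}) * (\<Prod>i\<in>{1..<m}. z i ^ a i)))
        = (\<Sum>a\<in>S. x a * (z 0 ^ (sum \<beta> {1..<m} - sum a {1..<m}) * (\<Prod>i\<in>{1..<m}. z i ^ a i)))"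
      using S(3) by (intro sum.mono_neutral_right) (auto simp: A_def S_def finite_PiE)
    with vanishing[OF that]
    have "(\<Sum>a\<in>S. x a * (z 0 ^ (sum \<beta> {1..<m} - sum a {1..<m}) * (\<Prod>i\<in>{1..<m}. z i ^ a i))) = 0"
      by simp
    from rehomogenised_form_vanishes[OF S(1) max sum_mono[OF a\<^sub>0_le] assms(3) this]
    show ?thesis
      using assms(2) by (simp add: prod_shift_exponent)
  qed
  then have "map (\<lambda>(c, z). c * (\<Sum>a\<in>S. x a * (\<Prod>i<m. z i ^ ?\<alpha> a i))) Z = map (\<lambda>_. 0) Z"
    by (intro map_cong) auto
  then have "0 = (\<Sum>(c, z)\<leftarrow>Z. c * (\<Sum>a\<in>S. x a * (\<Prod>i<m. z i ^ ?\<alpha> a i)))"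
    by (metis sum_list_0)
  also have "\<dots> = (\<Sum>a\<in>S. x a * (\<Sum>(c, z)\<leftarrow>Z. c * (\<Prod>i<m. z i ^ ?\<alpha> a i)))"
    by (simp add: case_prod_unfold sum_distrib_left sum_list_sum_swap mult_ac flip: sum_list_const_mult)
  also have "\<dots> = (\<Sum>a\<in>S. if a = a\<^sub>0 then x a * K else 0)"
  proof (rule sum.cong)
    fix a assume "a \<in> S"
    then have "a \<in> A" "a\<^sub>0 \<in> A"
      using a\<^sub>0(1) S(3) by auto
    then have "(\<forall>i<m. ?\<alpha> a i = \<beta> i) \<longleftrightarrow> a = a\<^sub>0"
      unfolding A_def by (rule shift_exponent_eq_iff)
    moreover have "(\<Sum>(c, z)\<leftarrow>Z. c * (\<Prod>i<m. z i ^ ?\<alpha> a i)) = (if \<forall>i<m. ?\<alpha> a i = \<beta> i then K else 0)"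
      using \<open>a \<in> S\<close> by (intro moments sum_shift_exponent[OF assms(2) a\<^sub>0_le max])
    ultimately show "x a * (\<Sum>(c, z)\<leftarrow>Z. c * (\<Prod>i<m. z i ^ ?\<alpha> a i)) = (if a = a\<^sub>0 then x a * K else 0)"
      by simp
  qed simp
  also have "\<dots> = x a\<^sub>0 * K"
    using S(1) a\<^sub>0(1) by simp
  finally show False
    using a\<^sub>0(1) assms(4) by (simp add: S_def)
qed

lemma length_ge_of_moments:
  fixes Z :: "(real \<times> (nat \<Rightarrow> real)) list" and \<beta> :: "nat \<Rightarrow> nat" and K :: real
  assumes "0 < m" and "0 < \<beta> 0" and "K \<noteq> 0"
    and moments: "\<And>\<alpha>. (\<Sum>i<m. \<alpha> i) = (\<Sum>i<m. \<beta> i) \<Longrightarrow>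
      (\<Sum>(c, z)\<leftarrow>Z. c * (\<Prod>i<m. z i ^ \<alpha> i)) = (if \<forall>i<m. \<alpha> i = \<beta> i then K else 0)"
  shows "(\<Prod>i\<in>{1..<m}. \<beta> i + 1) \<le> length Z"
proof (rule ccontr)
  define A where "A = PiE {1..<m} (\<lambda>i. {..\<beta> i})"
  define E where "E = map (\<lambda>(c, z) a. z 0 ^ (sum \<beta> {1..<m} - sum a {1..<m}) * (\<Prod>i\<in>{1..<m}. z i ^ a i)) Z"
  assume "\<not> ?thesis"
  then have "length E < card A"
    by (simp add: E_def A_def card_PiE)
  then obtain x where x: "\<exists>a\<in>A. x a \<noteq> 0" "\<forall>e\<in>set E. (\<Sum>a\<in>A. e a * x a) = 0"
    using homogeneous_system_nontrivial_solution[of A E] by (auto simp: A_def finite_PiE)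
  have "\<forall>a\<in>A. x a = 0"
    unfolding A_def
  proof (rule vanishing_form_of_moments_eq_0[OF assms])
    fix c z
    assume "(c, z) \<in> set Z"
    then show "(\<Sum>a\<in>PiE {1..<m} (\<lambda>i. {..\<beta> i}). x a * (z 0 ^ (sum \<beta> {1..<m} - sum a {1..<m}) * (\<Prod>i\<in>{1..<m}. z i ^ a i))) = 0"
      using x(2) by (force simp: E_def A_def mult.commute)
  qed
  with x(1) show False
    by blast
qed

section \<open>Partial derivatives of atoms and monomials\<close>

definition ffact :: "nat \<Rightarrow> nat \<Rightarrow> nat" where
  "ffact k n = (\<Prod>i<k. n - i)"

lemma ffact_0 [simp]: "ffact 0 n = 1"
  by (simp add: ffact_def)

lemma ffact_Suc: "ffact (Suc k) n = ffact k n * (n - k)"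
  by (simp add: ffact_def)

lemma ffact_add: "ffact (k + l) n = ffact k n * ffact l (n - k)"
  by (induction l) (simp_all add: ffact_Suc)

lemma ffact_self: "ffact n n = fact n"
  by (simp add: ffact_def fact_prod_rev atLeast0LessThan)

lemma ffact_eq_0_iff: "ffact k n = 0 \<longleftrightarrow> n < k"
  by (auto simp: ffact_def)

definition partial_deriv :: "nat \<Rightarrow> ((nat \<Rightarrow> real) \<Rightarrow> real) \<Rightarrow> (nat \<Rightarrow> real) \<Rightarrow> real" where
  "partial_deriv i F \<theta> = deriv (\<lambda>x. F (\<theta>(i := x))) (\<theta> i)"

lemma partial_deriv_eqI:
  assumes "\<And>\<theta> x. ((\<lambda>x. F (\<theta>(i := x))) has_real_derivative F' (\<theta>(i := x))) (at x)"
  shows "partial_deriv i F = F'"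
proof
  fix \<theta>
  show "partial_deriv i F \<theta> = F' \<theta>"
    using DERIV_imp_deriv[OF assms[of \<theta> "\<theta> i"]] by (simp add: partial_deriv_def)
qed

fun partial_derivs :: "(nat \<Rightarrow> nat) \<Rightarrow> nat \<Rightarrow> ((nat \<Rightarrow> real) \<Rightarrow> real) \<Rightarrow> (nat \<Rightarrow> real) \<Rightarrow> real" where
  "partial_derivs \<alpha> 0 F = F"
| "partial_derivs \<alpha> (Suc m) F = (partial_deriv m ^^ \<alpha> m) (partial_derivs \<alpha> m F)"

(* A decomposition g - h as a single list of signed atoms (c, u, \<kappa>); the even case has \<kappa> = 0. *)
definition atom_sum :: "nat \<Rightarrow> (real \<times> (nat \<Rightarrow> real) \<times> real) list \<Rightarrow> nat \<Rightarrow> (nat \<Rightarrow> real) \<Rightarrow> real" where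
  "atom_sum n L e \<theta> = (\<Sum>(c, u, \<kappa>)\<leftarrow>L. c * (lin n u \<theta> + \<kappa>) ^ e)"

lemma lin_upd: "i < n \<Longrightarrow> lin n u (\<theta>(i := x)) = lin n u \<theta> + u i * (x - \<theta> i)"
proof -
  assume "i < n"
  have "lin n u (\<theta>(i := x)) = (\<Sum>k<n. u k * \<theta> k + (if k = i then u i * (x - \<theta> i) else 0))"
    unfolding lin_def by (intro sum.cong) (auto simp: algebra_simps)
  also have "\<dots> = lin n u \<theta> + u i * (x - \<theta> i)"
    unfolding lin_def sum.distrib using \<open>i < n\<close> by simp
  finally show ?thesis .
qed

lemma partial_deriv_atom_sum:
  assumes "i < n"
  shows "partial_deriv i (atom_sum n L e) = atom_sum n (map (\<lambda>(c, u, \<kappa>). (c * real e * u i, u, \<kappa>)) L) (e - 1)"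
proof (rule partial_deriv_eqI)
  fix \<theta> x
  show "((\<lambda>x. atom_sum n L e (\<theta>(i := x))) has_real_derivative
      atom_sum n (map (\<lambda>(c, u, \<kappa>). (c * real e * u i, u, \<kappa>)) L) (e - 1) (\<theta>(i := x))) (at x)"
  proof (induction L)
    case (Cons a L)
    obtain c u \<kappa> where a: "a = (c, u, \<kappa>)"
      by (cases a)
    have "((\<lambda>x. c * (lin n u (\<theta>(i := x)) + \<kappa>) ^ e) has_real_derivative
        c * real e * u i * (lin n u (\<theta>(i := x)) + \<kappa>) ^ (e - 1)) (at x)"
      unfolding lin_upd[OF assms] by (auto intro!: derivative_eq_intros)
    from DERIV_add[OF this Cons.IH] show ?case
      unfolding atom_sum_def a by (simp only: list.map prod.case sum_list.Cons)
  qed (simp add: atom_sum_def)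
qed

lemma partial_deriv_pow_atom_sum:
  assumes "i < n"
  shows "(partial_deriv i ^^ k) (atom_sum n L e)
           = atom_sum n (map (\<lambda>(c, u, \<kappa>). (c * real (ffact k e) * u i ^ k, u, \<kappa>)) L) (e - k)"
proof (induction k)
  case 0
  then show ?case by (simp add: atom_sum_def case_prod_unfold)
next
  case (Suc k)
  then show ?case
    by (simp add: partial_deriv_atom_sum[OF assms] ffact_Suc case_prod_unfold o_def mult_ac)
qed

lemma partial_derivs_atom_sum:
  assumes "m \<le> n"
  shows "partial_derivs \<alpha> m (atom_sum n L e)
           = atom_sum n (map (\<lambda>(c, u, \<kappa>). (c * real (ffact (\<Sum>i<m. \<alpha> i) e) * (\<Prod>i<m. u i ^ \<alpha> i), u, \<kappa>)) L)
               (e - (\<Sum>i<m. \<alpha> i))"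
  using assms
proof (induction m)
  case 0
  then show ?case by (simp add: atom_sum_def case_prod_unfold)
next
  case (Suc m)
  then show ?case
    by (simp add: partial_deriv_pow_atom_sum ffact_add case_prod_unfold o_def diff_diff_left mult_ac)
qed

lemma monomial_upd:
  "i < n \<Longrightarrow> monomial n a (\<theta>(i := x)) = x ^ a i * (\<Prod>k\<in>{..<n} - {i}. \<theta> k ^ a k)"
  unfolding monomial_def by (subst prod.remove[of _ i]) (auto intro!: prod.cong)

lemma partial_deriv_monomial:
  assumes "i < n"
  shows "partial_deriv i (\<lambda>\<theta>. K * monomial n a \<theta>) = (\<lambda>\<theta>. K * real (a i) * monomial n (a(i := a i - 1)) \<theta>)"
proof (rule partial_deriv_eqI)
  fix \<theta> :: "nat \<Rightarrow> real" and x :: real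
  have "(\<Prod>k\<in>{..<n} - {i}. \<theta> k ^ (a(i := a i - 1)) k) = (\<Prod>k\<in>{..<n} - {i}. \<theta> k ^ a k)"
    by (intro prod.cong) auto
  then show "((\<lambda>x. K * monomial n a (\<theta>(i := x))) has_real_derivative
      K * real (a i) * monomial n (a(i := a i - 1)) (\<theta>(i := x))) (at x)"
    unfolding monomial_upd[OF assms] by (auto intro!: derivative_eq_intros)
qed

lemma partial_deriv_pow_monomial:
  assumes "i < n"
  shows "(partial_deriv i ^^ k) (\<lambda>\<theta>. K * monomial n a \<theta>)
           = (\<lambda>\<theta>. K * real (ffact k (a i)) * monomial n (a(i := a i - k)) \<theta>)"
proof (induction k)
  case (Suc k)
  have "(partial_deriv i ^^ Suc k) (\<lambda>\<theta>. K * monomial n a \<theta>)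
      = partial_deriv i (\<lambda>\<theta>. (K * real (ffact k (a i))) * monomial n (a(i := a i - k)) \<theta>)"
    by (simp only: Suc.IH funpow.simps comp_def)
  also have "\<dots> = (\<lambda>\<theta>. K * real (ffact k (a i)) * real (a i - k) * monomial n ((a(i := a i - k))(i := a i - k - 1)) \<theta>)"
    by (simp only: partial_deriv_monomial[OF assms] fun_upd_same)
  also have "(a(i := a i - k))(i := a i - k - 1) = a(i := a i - Suc k)"
    by simp
  finally show ?case
    by (simp only: ffact_Suc of_nat_mult mult.assoc)
qed simp

lemma partial_derivs_monomial:
  assumes "m \<le> n"
  shows "partial_derivs \<alpha> m (\<lambda>\<theta>. K * monomial n b \<theta>)
           = (\<lambda>\<theta>. K * real (\<Prod>i<m. ffact (\<alpha> i) (b i)) * monomial n (\<lambda>i. if i < m then b i - \<alpha> i else b i) \<theta>)"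
  using assms
proof (induction m)
  case (Suc m)
  define a where "a = (\<lambda>i. if i < m then b i - \<alpha> i else b i)"
  have "partial_derivs \<alpha> (Suc m) (\<lambda>\<theta>. K * monomial n b \<theta>)
      = (partial_deriv m ^^ \<alpha> m) (\<lambda>\<theta>. (K * real (\<Prod>i<m. ffact (\<alpha> i) (b i))) * monomial n a \<theta>)"
    using Suc by (simp add: a_def mult.assoc)
  also have "\<dots> = (\<lambda>\<theta>. K * real (\<Prod>i<m. ffact (\<alpha> i) (b i)) * real (ffact (\<alpha> m) (a m)) * monomial n (a(m := a m - \<alpha> m)) \<theta>)"
    using Suc.prems by (simp only: partial_deriv_pow_monomial Suc_le_lessD)
  also have "a(m := a m - \<alpha> m) = (\<lambda>i. if i < Suc m then b i - \<alpha> i else b i)"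
    by (auto simp: a_def)
  finally show ?case
    by (simp add: a_def mult_ac)
qed simp

lemma monomial_at_0: "monomial n a (\<lambda>_. 0) = (if \<forall>i<n. a i = 0 then 1 else 0)"
  unfolding monomial_def by (auto simp: zero_power)

lemma partial_derivs_monomial_at_0:
  "partial_derivs \<alpha> n (monomial n b) (\<lambda>_. 0) = (if \<forall>i<n. \<alpha> i = b i then \<Prod>i<n. fact (b i) else 0)"
proof -
  have "partial_derivs \<alpha> n (monomial n b) (\<lambda>_. 0)
      = real (\<Prod>i<n. ffact (\<alpha> i) (b i)) * monomial n (\<lambda>i. if i < n then b i - \<alpha> i else b i) (\<lambda>_. 0)"
    using partial_derivs_monomial[of n n \<alpha> 1 b] by simp
  also have "\<dots> = (if \<forall>i<n. \<alpha> i = b i then \<Prod>i<n. fact (b i) else 0)"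
  proof (cases "\<forall>i<n. \<alpha> i = b i")
    case True
    then show ?thesis
      by (simp add: monomial_at_0 ffact_self)
  next
    case False
    then obtain i where "i < n" "\<alpha> i \<noteq> b i"
      by blast
    then have "b i < \<alpha> i \<or> b i - \<alpha> i \<noteq> 0"
      by linarith
    then show ?thesis
      using False \<open>i < n\<close> by (auto simp: monomial_at_0 ffact_eq_0_iff)
  qed
  finally show ?thesis .
qed

lemma atom_sum_at_0: "atom_sum n L e (\<lambda>_. 0) = (\<Sum>(c, u, \<kappa>)\<leftarrow>L. c * \<kappa> ^ e)"
  by (simp add: atom_sum_def lin_def)

lemma moments_of_monomial_atom_sum:
  assumes "\<And>\<theta>. monomial n b \<theta> = atom_sum n L e \<theta>"
  shows "real (ffact (\<Sum>i<n. \<alpha> i) e) * (\<Sum>(c, u, \<kappa>)\<leftarrow>L. c * (\<Prod>i<n. u i ^ \<alpha> i) * \<kappa> ^ (e - (\<Sum>i<n. \<alpha> i)))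
           = (if \<forall>i<n. \<alpha> i = b i then \<Prod>i<n. fact (b i) else 0)"
proof -
  have "monomial n b = atom_sum n L e"
    using assms by blast
  then have "partial_derivs \<alpha> n (atom_sum n L e) (\<lambda>_. 0) = (if \<forall>i<n. \<alpha> i = b i then \<Prod>i<n. fact (b i) else 0)"
    using partial_derivs_monomial_at_0 by metis
  then show ?thesis
    by (simp add: partial_derivs_atom_sum atom_sum_at_0 case_prod_unfold o_def mult_ac
        flip: sum_list_const_mult)
qed

section \<open>Bounds on the minimum atom count\<close>

lemma is_DC_even_length_ge:
  assumes "0 < n" and "0 < b 0" and "is_DC_even n (\<Sum>i<n. b i) (monomial n b) g h"
  shows "(\<Prod>i\<in>{1..<n}. b i + 1) \<le> length g + length h"
proof -
  define s where "s = (\<Sum>i<n. b i)"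
  define L where "L = map (\<lambda>(a, u). (a, u, 0 :: real)) g @ map (\<lambda>(a, u). (- a, u, 0 :: real)) h"
  define Z where "Z = map (\<lambda>(c, u, \<kappa>). (c, u)) L"
  define K where "K = (\<Prod>i<n. fact (b i)) / real (ffact s s)"
  have dc: "monomial n b \<theta> = atom_sum n L s \<theta>" for \<theta>
    using assms(3) by (simp add: is_DC_even_def atom_sum_def L_def s_def case_prod_unfold o_def
        diff_conv_add_uminus uminus_sum_list_map)
  have "K \<noteq> 0"
    by (simp add: K_def ffact_eq_0_iff)
  have "(\<Prod>i\<in>{1..<n}. b i + 1) \<le> length Z"
  proof (rule length_ge_of_moments[where \<beta> = b, OF assms(1,2) \<open>K \<noteq> 0\<close>])
    fix \<alpha> :: "nat \<Rightarrow> nat"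
    assume "(\<Sum>i<n. \<alpha> i) = (\<Sum>i<n. b i)"
    then have "real (ffact s s) * (\<Sum>(c, z)\<leftarrow>Z. c * (\<Prod>i<n. z i ^ \<alpha> i))
        = (if \<forall>i<n. \<alpha> i = b i then \<Prod>i<n. fact (b i) else 0)"
      using moments_of_monomial_atom_sum[OF dc, of \<alpha>]
      by (simp add: Z_def s_def case_prod_unfold o_def)
    moreover have "real (ffact s s) \<noteq> 0"
      by (simp add: ffact_eq_0_iff)
    ultimately show "(\<Sum>(c, z)\<leftarrow>Z. c * (\<Prod>i<n. z i ^ \<alpha> i)) = (if \<forall>i<n. \<alpha> i = b i then K else 0)"
      by (cases "\<forall>i<n. \<alpha> i = b i") (simp_all add: K_def field_simps)
  qed
  then show ?thesis
    by (simp add: Z_def L_def)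
qed

lemma is_DC_odd_length_ge:
  assumes "is_DC_odd n (\<Sum>i<n. b i) (monomial n b) g h"
  shows "(\<Prod>i<n. b i + 1) \<le> length g + length h"
proof -
  define s where "s = (\<Sum>i<n. b i)"
  define L where "L = g @ map (\<lambda>(a, u, \<kappa>). (- a, u, \<kappa>)) h"
  define Z where "Z = map (\<lambda>(c, u, \<kappa>). (c, case_nat \<kappa> u)) L"
  define \<beta> where "\<beta> = case_nat 1 b"
  define K where "K = (\<Prod>i<n. fact (b i)) / real (ffact s (Suc s))"
  have dc: "monomial n b \<theta> = atom_sum n L (Suc s) \<theta>" for \<theta>
    using assms by (simp add: is_DC_odd_def atom_sum_def L_def s_def case_prod_unfold o_def
        diff_conv_add_uminus uminus_sum_list_map)
  have "K \<noteq> 0"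
    by (simp add: K_def ffact_eq_0_iff)
  have "(\<Prod>i\<in>{1..<Suc n}. \<beta> i + 1) \<le> length Z"
  proof (rule length_ge_of_moments[where \<beta> = \<beta>])
    show "0 < Suc n" "0 < \<beta> 0" "K \<noteq> 0"
      using \<open>K \<noteq> 0\<close> by (simp_all add: \<beta>_def)
    fix \<alpha> :: "nat \<Rightarrow> nat"
    assume "(\<Sum>i<Suc n. \<alpha> i) = (\<Sum>i<Suc n. \<beta> i)"
    then have sum_\<alpha>: "\<alpha> 0 + (\<Sum>i<n. \<alpha> (Suc i)) = Suc s"
      by (simp only: sum.lessThan_Suc_shift) (simp add: \<beta>_def s_def)
    have \<alpha>_eq_\<beta>: "(\<forall>i<Suc n. \<alpha> i = \<beta> i) \<longleftrightarrow> (\<forall>i<n. \<alpha> (Suc i) = b i)"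
    proof
      assume "\<forall>i<n. \<alpha> (Suc i) = b i"
      moreover from this have "\<alpha> 0 = 1"
        using sum_\<alpha> by (simp add: s_def)
      ultimately show "\<forall>i<Suc n. \<alpha> i = \<beta> i"
        by (auto simp: \<beta>_def less_Suc_eq_0_disj)
    qed (simp add: \<beta>_def)
    have moment: "real (ffact (\<Sum>i<n. \<alpha> (Suc i)) (Suc s)) * (\<Sum>(c, z)\<leftarrow>Z. c * (\<Prod>i<Suc n. z i ^ \<alpha> i))
        = (if \<forall>i<n. \<alpha> (Suc i) = b i then \<Prod>i<n. fact (b i) else 0)"
    proof -
      have "Suc s - (\<Sum>i<n. \<alpha> (Suc i)) = \<alpha> 0"
        using sum_\<alpha> by simp
      then have "(\<Prod>i<Suc n. case_nat \<kappa> u i ^ \<alpha> i) = (\<Prod>i<n. u i ^ \<alpha> (Suc i)) * \<kappa> ^ (Suc s - (\<Sum>i<n. \<alpha> (Suc i)))"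
        for \<kappa> :: real and u
        by (simp only: prod.lessThan_Suc_shift) simp
      then show ?thesis
        using moments_of_monomial_atom_sum[OF dc, of "\<lambda>i. \<alpha> (Suc i)"]
        by (simp add: Z_def case_prod_unfold o_def mult.assoc)
    qed
    moreover have "real (ffact (\<Sum>i<n. \<alpha> (Suc i)) (Suc s)) \<noteq> 0"
      using sum_\<alpha> by (simp add: ffact_eq_0_iff)
    ultimately show "(\<Sum>(c, z)\<leftarrow>Z. c * (\<Prod>i<Suc n. z i ^ \<alpha> i)) = (if \<forall>i<Suc n. \<alpha> i = \<beta> i then K else 0)"
      unfolding \<alpha>_eq_\<beta> by (cases "\<forall>i<n. \<alpha> (Suc i) = b i") (auto simp: K_def s_def field_simps)
  qed
  moreover have "(\<Prod>i\<in>{1..<Suc n}. \<beta> i + 1) = (\<Prod>i<n. b i + 1)"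
    unfolding One_nat_def prod.atLeast_Suc_lessThan_Suc_shift by (simp add: \<beta>_def atLeast0LessThan)
  ultimately show ?thesis
    by (simp add: Z_def L_def)
qed

lemma ex_DC_even_length_le:
  assumes "even (\<Sum>i<n. b i)" and "0 < (\<Sum>i<n. b i)"
  shows "\<exists>g h. is_DC_even n (\<Sum>i<n. b i) (monomial n b) g h \<and> length g + length h \<le> (\<Prod>i<n. b i + 1) div 2"
proof -
  define s where "s = (\<Sum>i<n. b i)"
  define L where "L = map (\<lambda>(w, u). (2 / fact s * w, u)) (fd_half_atoms b n)"
  have "monomial n b \<theta> = ridge_sum n L (\<lambda>x. x ^ s) \<theta>" for \<theta>
  proof -
    have "2 * ridge_sum n (fd_half_atoms b n) (\<lambda>x. x ^ s) \<theta> = ridge_sum n (fd_atoms b n) (\<lambda>x. (x + 0) ^ s) \<theta>"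
      using ridge_sum_fd_half_atoms[where e = s and n = n and b = b] assms by (simp add: s_def)
    also have "\<dots> = fact s * monomial n b \<theta>"
      using ridge_sum_fd_atoms_power[where e = s and c = 0 and n = n and b = b] by (simp add: s_def)
    finally show ?thesis
      unfolding L_def ridge_sum_scale by (simp add: field_simps)
  qed
  then obtain g h where "is_DC_even n s (monomial n b) g h" "length g + length h \<le> length L"
    using is_DC_even_of_ridge_sum by blast
  then show ?thesis
    by (auto simp: L_def s_def length_fd_half_atoms)
qed

lemma ex_DC_odd_length_le:
  "\<exists>g h. is_DC_odd n (\<Sum>i<n. b i) (monomial n b) g h \<and> length g + length h \<le> (\<Prod>i<n. b i + 1)"
proof -
  define s where "s = (\<Sum>i<n. b i)"
  define L where "L = map (\<lambda>(w, u). (1 / fact (Suc s) * w, u)) (fd_atoms b n)"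
  have "monomial n b \<theta> = ridge_sum n L (\<lambda>x. (x + 1) ^ Suc s) \<theta>" for \<theta>
    using ridge_sum_fd_atoms_power[where e = "Suc s" and c = 1 and n = n and b = b]
    unfolding L_def ridge_sum_scale by (simp add: s_def del: fact_Suc)
  then obtain g h where "is_DC_odd n s (monomial n b) g h" "length g + length h \<le> length L"
    using is_DC_odd_of_ridge_sum by blast
  then show ?thesis
    by (auto simp: L_def s_def length_fd_atoms)
qed

lemma min_atoms_even_le: "is_DC_even n s f g h \<Longrightarrow> min_atoms_even n s f \<le> length g + length h"
  unfolding min_atoms_even_def by (rule Least_le) blast

lemma le_min_atoms_even:
  "has_DC_even n s f \<Longrightarrow> (\<And>g h. is_DC_even n s f g h \<Longrightarrow> N \<le> length g + length h) \<Longrightarrow> N \<le> min_atoms_even n s f"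
  unfolding min_atoms_even_def has_DC_even_def by (rule LeastI2_ex) auto

lemma min_atoms_odd_le: "is_DC_odd n s f g h \<Longrightarrow> min_atoms_odd n s f \<le> length g + length h"
  unfolding min_atoms_odd_def by (rule Least_le) blast

lemma le_min_atoms_odd:
  "has_DC_odd n s f \<Longrightarrow> (\<And>g h. is_DC_odd n s f g h \<Longrightarrow> N \<le> length g + length h) \<Longrightarrow> N \<le> min_atoms_odd n s f"
  unfolding min_atoms_odd_def has_DC_odd_def by (rule LeastI2_ex) auto

theorem theorem3p2:
  fixes n :: nat and b :: "nat \<Rightarrow> nat"
  assumes "n \<ge> 1"
    and "\<And>i. i < n \<Longrightarrow> 1 \<le> b i"
    and "\<And>i j. i \<le> j \<Longrightarrow> j < n \<Longrightarrow> b i \<le> b j"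
  defines "s \<equiv> (\<Sum>i<n. b i)"
  shows "(even s \<longrightarrow>
            has_DC_even n s (monomial n b) \<and>
            (\<Prod>i\<in>{1..<n}. b i + 1) \<le> min_atoms_even n s (monomial n b) \<and>
            min_atoms_even n s (monomial n b) \<le> (\<Prod>i<n. b i + 1) div 2)
       \<and> (odd s \<longrightarrow>
            has_DC_odd n s (monomial n b) \<and>
            min_atoms_odd n s (monomial n b) = (\<Prod>i<n. b i + 1))"
proof (intro conjI impI)
  have "0 < n" and "0 < b 0"
    using assms(1) assms(2)[of 0] by auto
  moreover have "b 0 \<le> s"
    unfolding s_def using \<open>0 < n\<close> by (intro member_le_sum) auto
  ultimately have "0 < s"
    by simp
  assume "even s"
  then obtain g h where gh: "is_DC_even n s (monomial n b) g h" "length g + length h \<le> (\<Prod>i<n. b i + 1) div 2"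
    using ex_DC_even_length_le \<open>0 < s\<close> unfolding s_def by blast
  then show "has_DC_even n s (monomial n b)"
    by (auto simp: has_DC_even_def)
  then show "(\<Prod>i\<in>{1..<n}. b i + 1) \<le> min_atoms_even n s (monomial n b)"
    using is_DC_even_length_ge[where b = b, OF \<open>0 < n\<close> \<open>0 < b 0\<close>] unfolding s_def by (rule le_min_atoms_even)
  show "min_atoms_even n s (monomial n b) \<le> (\<Prod>i<n. b i + 1) div 2"
    using min_atoms_even_le[OF gh(1)] gh(2) by linarith
next
  obtain g h where gh: "is_DC_odd n s (monomial n b) g h" "length g + length h \<le> (\<Prod>i<n. b i + 1)"
    using ex_DC_odd_length_le unfolding s_def by blast
  then show "has_DC_odd n s (monomial n b)"
    by (auto simp: has_DC_odd_def)
  then have "(\<Prod>i<n. b i + 1) \<le> min_atoms_odd n s (monomial n b)"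
    using is_DC_odd_length_ge unfolding s_def by (rule le_min_atoms_odd)
  moreover have "min_atoms_odd n s (monomial n b) \<le> (\<Prod>i<n. b i + 1)"
    using min_atoms_odd_le[OF gh(1)] gh(2) by linarith
  ultimately show "min_atoms_odd n s (monomial n b) = (\<Prod>i<n. b i + 1)"
    by simp
qed

end
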